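(* Let $D$ be an integral domain, $T$ an overring of $D$, $\star$ a semistar operation on $D$ and $\star'$ a semistar operation on $T$. The following are equivalent: (i) $T$ is $(\star,\star')$-linked to $D$; (ii) for every nonzero ideal $I$ of $D$, $I^{\star_f}=D^\star$ implies $(IT)^{\star'_f}=T^{\star'}$; (iii) for every quasi-$\star'_f$-ideal $J$ of $T$ with $J\ne T$, $(J\cap D)^{\star_f}\ne D^\star$; (iv) for every quasi-$\star'_f$-prime ideal $Q$ of $T$, $(Q\cap D)^{\star_f}\ne D^\star$; (v) for every quasi-$\star'_f$-maximal ideal $N$ of $T$, $(N\cap D)^{\star_f}\ne D^\star$.
   Context: Let $D$ be an integral domain with quotient field $K$. $\overline{\mathbf F}(D)$ denotes the set of all nonzero $D$-submodules of $K$ and $\mathbf f(D)$ the set of nonzero finitely generated $D$-submodules of $K$. A semistar operation on $D$ is a map $\star:\overline{\mathbf F}(D)\to\overline{\mathbf F}(D)$, $E\mapsto E^\star$, such that for all $0\ne x\in K$ and $E,F\in\overline{\mathbf F}(D)$: (1) $(xE)^\star=xE^\star$; (2) $E\subseteq F\Rightarrow E^\star\subseteq F^\star$; (3) $E\subseteq E^\star$ and $(E^\star)^\star=E^\star$. $\star_f$ is defined by $E^{\star_f}=\bigcup\{F^\star:F\in\mathbf f(D),F\subseteq E\}$. A nonzero ideal $I$ of $D$ is a quasi-$\star$-ideal if $I^\star\cap D=I$; a quasi-$\star$-prime is a prime quasi-$\star$-ideal; a quasi-$\star$-maximal ideal is a maximal element among proper quasi-$\star$-ideals. An overring of $D$ is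 a ring $T$ with $D\subseteq T\subseteq K$; the same notions are defined on $T$. $T$ is $(\star,\star')$-linked to $D$ if for every nonzero finitely generated ideal $F\subseteq D$ with $F^\star=D^\star$ one has $(FT)^{\star'}=T^{\star'}$. *)

theory Defs
  imports Main
begin

text \<open>The quotient field K is the ambient type 'K (a field); subrings of K are sets.\<close>

definition subring :: "'K::field set \<Rightarrow> bool" where
  "subring R \<longleftrightarrow> 0 \<in> R \<and> 1 \<in> R \<and> (\<forall>x\<in>R. \<forall>y\<in>R. x + y \<in> R \<and> x - y \<in> R \<and> x * y \<in> R)"

definition domain_with_qf :: "'K::field set \<Rightarrow> bool" where
  "domain_with_qf D \<longleftrightarrow> subring D \<and> (\<forall>x::'K. \<exists>a\<in>D. \<exists>b\<in>D. b \<noteq> 0 \<and> x = a / b)"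

definition overring :: "'K::field set \<Rightarrow> 'K set \<Rightarrow> bool" where
  "overring D T \<longleftrightarrow> subring T \<and> D \<subseteq> T"

definition submodule :: "'K::field set \<Rightarrow> 'K set \<Rightarrow> bool" where
  "submodule R E \<longleftrightarrow> 0 \<in> E \<and> (\<forall>x\<in>E. \<forall>y\<in>E. x + y \<in> E) \<and> (\<forall>r\<in>R. \<forall>x\<in>E. r * x \<in> E)"

definition Fbar :: "'K::field set \<Rightarrow> 'K set set" where
  "Fbar R = {E. submodule R E \<and> E \<noteq> {0}}"

definition rspan :: "'K::field set \<Rightarrow> 'K set \<Rightarrow> 'K set" where
  "rspan R S = {(\<Sum>s\<in>S. a s * s) | a. \<forall>s\<in>S. a s \<in> R}"

definition ffg :: "'K::field set \<Rightarrow> 'K set set" where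
  "ffg R = {E. \<exists>S. finite S \<and> E = rspan R S \<and> E \<noteq> {0}}"

definition semistar :: "'K::field set \<Rightarrow> ('K set \<Rightarrow> 'K set) \<Rightarrow> bool" where
  "semistar R st \<longleftrightarrow>
     (\<forall>E\<in>Fbar R. st E \<in> Fbar R) \<and>
     (\<forall>x E. x \<noteq> 0 \<longrightarrow> E \<in> Fbar R \<longrightarrow> st ((\<lambda>e. x * e) ` E) = (\<lambda>e. x * e) ` st E) \<and>
     (\<forall>E\<in>Fbar R. \<forall>F\<in>Fbar R. E \<subseteq> F \<longrightarrow> st E \<subseteq> st F) \<and>
     (\<forall>E\<in>Fbar R. E \<subseteq> st E \<and> st (st E) = st E)"

definition star_f :: "'K::field set \<Rightarrow> ('K set \<Rightarrow> 'K set) \<Rightarrow> 'K set \<Rightarrow> 'K set" where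
  "star_f R st E = \<Union>{st F | F. F \<in> ffg R \<and> F \<subseteq> E}"

definition nz_ideal :: "'K::field set \<Rightarrow> 'K set \<Rightarrow> bool" where
  "nz_ideal R I \<longleftrightarrow> I \<subseteq> R \<and> submodule R I \<and> I \<noteq> {0}"

definition quasi_ideal :: "'K::field set \<Rightarrow> ('K set \<Rightarrow> 'K set) \<Rightarrow> 'K set \<Rightarrow> bool" where
  "quasi_ideal R st I \<longleftrightarrow> nz_ideal R I \<and> st I \<inter> R = I"

definition prime_ideal :: "'K::field set \<Rightarrow> 'K set \<Rightarrow> bool" where
  "prime_ideal R P \<longleftrightarrow> P \<subseteq> R \<and> submodule R P \<and> P \<noteq> R \<and>
     (\<forall>x\<in>R. \<forall>y\<in>R. x * y \<in> P \<longrightarrow> x \<in> P \<or> y \<in> P)"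

definition quasi_prime :: "'K::field set \<Rightarrow> ('K set \<Rightarrow> 'K set) \<Rightarrow> 'K set \<Rightarrow> bool" where
  "quasi_prime R st P \<longleftrightarrow> prime_ideal R P \<and> quasi_ideal R st P"

definition quasi_maximal :: "'K::field set \<Rightarrow> ('K set \<Rightarrow> 'K set) \<Rightarrow> 'K set \<Rightarrow> bool" where
  "quasi_maximal R st M \<longleftrightarrow> quasi_ideal R st M \<and> M \<noteq> R \<and>
     (\<forall>J. quasi_ideal R st J \<and> J \<noteq> R \<and> M \<subseteq> J \<longrightarrow> J = M)"

definition ext_ideal :: "'K::field set \<Rightarrow> 'K set \<Rightarrow> 'K set" where
  "ext_ideal I T = {(\<Sum>i<n. t i * x i) | (n::nat) t x. \<forall>i<n. t i \<in> T \<and> x i \<in> I}"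

definition linked :: "'K::field set \<Rightarrow> ('K set \<Rightarrow> 'K set) \<Rightarrow> 'K set \<Rightarrow> ('K set \<Rightarrow> 'K set) \<Rightarrow> bool" where
  "linked D st T st' \<longleftrightarrow>
     (\<forall>F. nz_ideal D F \<and> F \<in> ffg D \<and> st F = st D \<longrightarrow> st' (ext_ideal F T) = st' T)"

end

theory Submission
  imports Defs
begin

text \<open>
  Write IT for the extension of an ideal I of D to T. Since *_f has finite type,
  I^{*_f} = D^* means that 1 \<in> F^* for a finitely generated F \<subseteq> I, and then F^* = D^*;
  FT is a finitely generated T-submodule of IT, so linkedness yields (IT)^{*'_f} = T^{*'}.
  Conversely F^{*_f} = F^* for finitely generated F.
  If a proper quasi-*'_f-ideal J had (J \<inter> D)^{*_f} = D^*, then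
  1 \<in> ((J \<inter> D)T)^{*'_f} \<subseteq> J^{*'_f}, hence 1 \<in> J^{*'_f} \<inter> T = J.
  Finally, if (IT)^{*'_f} \<noteq> T^{*'} then 1 \<notin> (IT)^{*'_f}, and Zorn's lemma, again by
  finiteness of type, gives an ideal N \<supseteq> IT maximal with 1 \<notin> N^{*'_f}. Such an N is
  a quasi-*'_f-maximal prime ideal, and I \<subseteq> N \<inter> D forces (N \<inter> D)^{*_f} = D^*.
\<close>

section \<open>Submodules and finite spans\<close>

lemma submodule_zero: "submodule R E \<Longrightarrow> 0 \<in> E"
  by (simp add: submodule_def)

lemma submodule_add: "submodule R E \<Longrightarrow> x \<in> E \<Longrightarrow> y \<in> E \<Longrightarrow> x + y \<in> E"
  by (simp add: submodule_def)

lemma submodule_mult: "submodule R E \<Longrightarrow> r \<in> R \<Longrightarrow> x \<in> E \<Longrightarrow> r * x \<in> E"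
  by (simp add: submodule_def)

lemma subring_submodule: "subring R \<Longrightarrow> submodule R R"
  by (simp add: subring_def submodule_def)

lemma subring_in_Fbar: "subring R \<Longrightarrow> R \<in> Fbar R"
  by (auto simp: Fbar_def subring_submodule subring_def)

lemma submodule_scale:
  assumes "submodule R E" shows "submodule R ((\<lambda>e. y * e) ` E)"
  unfolding submodule_def
proof (intro conjI ballI)
  show "0 \<in> (\<lambda>e. y * e) ` E" using submodule_zero[OF assms] by force
next
  fix a b assume "a \<in> (\<lambda>e. y * e) ` E" "b \<in> (\<lambda>e. y * e) ` E"
  then obtain a' b' where "a = y * a'" "b = y * b'" "a' \<in> E" "b' \<in> E" by blast
  then show "a + b \<in> (\<lambda>e. y * e) ` E"
    using submodule_add[OF assms] by (metis distrib_left image_eqI)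
next
  fix r a assume "r \<in> R" "a \<in> (\<lambda>e. y * e) ` E"
  then obtain a' where "a = y * a'" "a' \<in> E" by blast
  then show "r * a \<in> (\<lambda>e. y * e) ` E"
    using submodule_mult[OF assms \<open>r \<in> R\<close>] by (metis mult.left_commute image_eqI)
qed

lemma submodule_Union_chain:
  assumes "C \<noteq> {}" "chain\<^sub>\<subseteq> C" "\<And>J. J \<in> C \<Longrightarrow> submodule R J"
  shows "submodule R (\<Union>C)"
  unfolding submodule_def
proof (intro conjI ballI)
  show "0 \<in> \<Union>C" using assms(1,3) submodule_zero by blast
next
  fix x y assume "x \<in> \<Union>C" "y \<in> \<Union>C"
  then obtain X Y where XY: "X \<in> C" "Y \<in> C" "x \<in> X" "y \<in> Y" by blast
  then have "X \<union> Y \<in> C" using assms(2) unfolding chain_subset_def by (metis sup.absorb1 sup.absorb2)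
  then show "x + y \<in> \<Union>C" using submodule_add[OF assms(3)] XY by blast
next
  fix r x assume "r \<in> R" "x \<in> \<Union>C"
  then show "r * x \<in> \<Union>C" using submodule_mult assms(3) by blast
qed

lemma rspan_memI: "\<forall>s\<in>S. a s \<in> R \<Longrightarrow> (\<Sum>s\<in>S. a s * s) \<in> rspan R S"
  unfolding rspan_def by blast

lemma rspan_submodule:
  assumes "subring R" shows "submodule R (rspan R S)"
  unfolding submodule_def
proof (intro conjI ballI)
  show "0 \<in> rspan R S" unfolding rspan_def
    using assms by (auto simp: subring_def intro!: exI[of _ "\<lambda>_. 0"])
next
  fix x y assume "x \<in> rspan R S" "y \<in> rspan R S"
  then obtain a b where "x = (\<Sum>s\<in>S. a s * s)" "\<forall>s\<in>S. a s \<in> R"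
    and "y = (\<Sum>s\<in>S. b s * s)" "\<forall>s\<in>S. b s \<in> R" unfolding rspan_def by blast
  moreover from this have "x + y = (\<Sum>s\<in>S. (a s + b s) * s)"
    by (simp add: sum.distrib distrib_right)
  ultimately show "x + y \<in> rspan R S"
    using assms by (simp add: rspan_memI subring_def)
next
  fix r x assume r: "r \<in> R" and "x \<in> rspan R S"
  then obtain a where "x = (\<Sum>s\<in>S. a s * s)" "\<forall>s\<in>S. a s \<in> R" unfolding rspan_def by blast
  moreover from this have "r * x = (\<Sum>s\<in>S. (r * a s) * s)"
    by (simp add: sum_distrib_left mult.assoc)
  ultimately show "r * x \<in> rspan R S"
    using r assms by (simp add: rspan_memI subring_def)
qed

lemma rspan_least:
  assumes "finite S" "S \<subseteq> M" "submodule R M" shows "rspan R S \<subseteq> M"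
proof -
  have "(\<Sum>s\<in>S. a s * s) \<in> M" if "\<forall>s\<in>S. a s \<in> R" for a
    using assms(1,2) that
    by (induction S rule: finite_induct)
      (simp_all add: submodule_zero[OF assms(3)] submodule_add[OF assms(3)] submodule_mult[OF assms(3)])
  then show ?thesis unfolding rspan_def by blast
qed

lemma rspan_generators:
  assumes "subring R" "finite S" shows "S \<subseteq> rspan R S"
proof
  fix s assume "s \<in> S"
  have "(\<Sum>t\<in>S. (if t = s then 1 else 0) * t) = (\<Sum>t\<in>S. if t = s then t else 0)"
    by (rule sum.cong) auto
  also have "\<dots> = s" using assms(2) \<open>s \<in> S\<close> by simp
  finally show "s \<in> rspan R S"
    using rspan_memI[of S "\<lambda>t. if t = s then 1 else 0"] assms(1) by (simp add: subring_def)
qed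

lemma rspan_mono_ring: "R \<subseteq> R' \<Longrightarrow> rspan R S \<subseteq> rspan R' S"
  unfolding rspan_def by blast

lemma rspan_scale:
  fixes y :: "'K::field"
  assumes R: "subring R" and S: "finite S" and y: "y \<noteq> 0"
  shows "(\<lambda>e. y * e) ` rspan R S = rspan R ((\<lambda>e. y * e) ` S)"
proof
  show "rspan R ((\<lambda>e. y * e) ` S) \<subseteq> (\<lambda>e. y * e) ` rspan R S"
    using rspan_generators[OF R S] S
    by (intro rspan_least submodule_scale rspan_submodule R) auto
next
  have "S \<subseteq> (\<lambda>e. inverse y * e) ` rspan R ((\<lambda>e. y * e) ` S)"
  proof
    fix s assume "s \<in> S"
    then have "y * s \<in> rspan R ((\<lambda>e. y * e) ` S)" using rspan_generators[OF R] S by blast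
    moreover have "s = inverse y * (y * s)" using y by simp
    ultimately show "s \<in> (\<lambda>e. inverse y * e) ` rspan R ((\<lambda>e. y * e) ` S)" by blast
  qed
  then have "rspan R S \<subseteq> (\<lambda>e. inverse y * e) ` rspan R ((\<lambda>e. y * e) ` S)"
    by (intro rspan_least submodule_scale rspan_submodule R S)
  then show "(\<lambda>e. y * e) ` rspan R S \<subseteq> rspan R ((\<lambda>e. y * e) ` S)"
    using y by (auto dest!: subsetD simp: mult.assoc[symmetric])
qed

lemma ffg_Fbar: "subring R \<Longrightarrow> F \<in> ffg R \<Longrightarrow> F \<in> Fbar R"
  unfolding ffg_def Fbar_def using rspan_submodule by blast

lemma ffg_scale:
  fixes y :: "'K::field"
  assumes "subring R" "y \<noteq> 0" "G \<in> ffg R" shows "(\<lambda>e. y * e) ` G \<in> ffg R"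
proof -
  obtain S where S: "finite S" "G = rspan R S" "G \<noteq> {0}" using assms(3) unfolding ffg_def by blast
  have "(\<lambda>e. y * e) ` G \<noteq> {0}"
  proof
    assume "(\<lambda>e. y * e) ` G = {0}"
    then have "G \<subseteq> {0}" using assms(2) by (metis image_eqI mult_eq_0_iff singletonD subsetI)
    then show False using S(3) \<open>(\<lambda>e. y * e) ` G = {0}\<close> by auto
  qed
  then show ?thesis unfolding ffg_def using S rspan_scale[OF assms(1) S(1) assms(2)] by blast
qed

lemma ffg_directed:
  assumes "subring R" "F1 \<in> ffg R" "F2 \<in> ffg R" "F1 \<subseteq> E" "F2 \<subseteq> E" "submodule R E"
  obtains F where "F \<in> ffg R" "F1 \<union> F2 \<subseteq> F" "F \<subseteq> E"
proof -
  obtain S1 S2 where S: "finite S1" "F1 = rspan R S1" "F1 \<noteq> {0}" "finite S2" "F2 = rspan R S2"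
    using assms(2,3) unfolding ffg_def by blast
  let ?F = "rspan R (S1 \<union> S2)"
  have "S1 \<union> S2 \<subseteq> ?F" using rspan_generators[OF assms(1), of "S1 \<union> S2"] S by simp
  then have "F1 \<union> F2 \<subseteq> ?F" using S rspan_least[OF _ _ rspan_submodule[OF assms(1)]] by auto
  moreover have "?F \<subseteq> E"
    using rspan_generators[OF assms(1)] S assms(4,5) by (intro rspan_least assms(6)) blast+
  moreover have "?F \<in> ffg R"
    using \<open>F1 \<union> F2 \<subseteq> ?F\<close> S submodule_zero[OF rspan_submodule[OF assms(1)]] unfolding ffg_def by blast
  ultimately show thesis using that by blast
qed

section \<open>Extension and contraction of ideals\<close>

lemma sum_lessThan_add:
  "(\<Sum>i<(n::nat) + m. f i) = (\<Sum>i<n. f i) + (\<Sum>i<m. f (n + i))"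
  by (induct m) (auto simp: add_ac)

lemma ext_idealI: "\<forall>i<(n::nat). t i \<in> T \<and> x i \<in> I \<Longrightarrow> (\<Sum>i<n. t i * x i) \<in> ext_ideal I T"
  unfolding ext_ideal_def by blast

lemma ext_idealE:
  assumes "z \<in> ext_ideal I T"
  obtains n t x where "z = (\<Sum>i<(n::nat). t i * x i)" "\<forall>i<n. t i \<in> T \<and> x i \<in> I"
  using assms unfolding ext_ideal_def by blast

lemma ext_ideal_submodule:
  assumes "subring T" shows "submodule T (ext_ideal I T)"
  unfolding submodule_def
proof (intro conjI ballI)
  show "0 \<in> ext_ideal I T" using ext_idealI[of 0] by simp
next
  fix x y assume "x \<in> ext_ideal I T" "y \<in> ext_ideal I T"
  then obtain n t u m t' u' where
    x: "x = (\<Sum>i<(n::nat). t i * u i)" "\<forall>i<n. t i \<in> T \<and> u i \<in> I" and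
    y: "y = (\<Sum>i<(m::nat). t' i * u' i)" "\<forall>i<m. t' i \<in> T \<and> u' i \<in> I"
    by (elim ext_idealE)
  define tt where "tt i = (if i < n then t i else t' (i - n))" for i
  define uu where "uu i = (if i < n then u i else u' (i - n))" for i
  have "x + y = (\<Sum>i<n + m. tt i * uu i)"
    using x y by (simp add: sum_lessThan_add tt_def uu_def)
  moreover have "\<forall>i<n + m. tt i \<in> T \<and> uu i \<in> I" using x y by (auto simp: tt_def uu_def)
  ultimately show "x + y \<in> ext_ideal I T" using ext_idealI by simp
next
  fix r x assume r: "r \<in> T" and "x \<in> ext_ideal I T"
  then obtain n t u where "x = (\<Sum>i<(n::nat). t i * u i)" "\<forall>i<n. t i \<in> T \<and> u i \<in> I"
    by (elim ext_idealE)
  moreover from this have "r * x = (\<Sum>i<n. (r * t i) * u i)"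
    by (simp add: sum_distrib_left mult.assoc)
  ultimately show "r * x \<in> ext_ideal I T"
    using r assms ext_idealI[of n "\<lambda>i. r * t i"] by (simp add: subring_def)
qed

lemma ext_ideal_least:
  assumes "submodule T M" "I \<subseteq> M" shows "ext_ideal I T \<subseteq> M"
proof
  fix z assume "z \<in> ext_ideal I T"
  then obtain n t u where "z = (\<Sum>i<(n::nat). t i * u i)" "\<forall>i<n. t i \<in> T \<and> u i \<in> I"
    by (elim ext_idealE)
  moreover have "\<forall>i<n. t i \<in> T \<and> u i \<in> I \<Longrightarrow> (\<Sum>i<n. t i * u i) \<in> M" for n :: nat
    by (induct n) (use assms in \<open>auto simp: submodule_zero submodule_add submodule_mult\<close>)
  ultimately show "z \<in> M" by simp
qed

lemma ext_ideal_contains: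
  assumes "subring T" shows "I \<subseteq> ext_ideal I T"
proof
  fix x assume "x \<in> I"
  then show "x \<in> ext_ideal I T"
    using assms ext_idealI[of "Suc 0" "\<lambda>_. 1" T "\<lambda>_. x"] by (simp add: subring_def)
qed

lemma ext_ideal_mono: "subring T \<Longrightarrow> I \<subseteq> I' \<Longrightarrow> ext_ideal I T \<subseteq> ext_ideal I' T"
  using ext_ideal_contains[of T I'] by (intro ext_ideal_least ext_ideal_submodule) auto

lemma ext_ideal_subset: "subring T \<Longrightarrow> I \<subseteq> T \<Longrightarrow> ext_ideal I T \<subseteq> T"
  by (simp add: ext_ideal_least subring_submodule)

lemma ext_ideal_Fbar:
  assumes "subring T" "nz_ideal D I" shows "ext_ideal I T \<in> Fbar T"
proof -
  have "I \<subseteq> ext_ideal I T" using ext_ideal_contains[OF assms(1)] .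
  moreover have "0 \<in> I" "I \<noteq> {0}" using assms(2) by (simp_all add: nz_ideal_def submodule_def)
  ultimately have "ext_ideal I T \<noteq> {0}" by blast
  then show ?thesis using ext_ideal_submodule[OF assms(1)] by (simp add: Fbar_def)
qed

lemma ext_ideal_rspan:
  assumes "subring D" "overring D T" "finite S"
  shows "ext_ideal (rspan D S) T = rspan T S"
proof
  have T: "subring T" "D \<subseteq> T" using assms(2) by (simp_all add: overring_def)
  show "ext_ideal (rspan D S) T \<subseteq> rspan T S"
    by (intro ext_ideal_least rspan_submodule rspan_mono_ring T)
  have "S \<subseteq> ext_ideal (rspan D S) T"
    using rspan_generators[OF assms(1,3)] ext_ideal_contains[OF T(1)] by blast
  then show "rspan T S \<subseteq> ext_ideal (rspan D S) T"
    by (intro rspan_least ext_ideal_submodule T assms(3))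
qed

lemma ext_ideal_ffg:
  assumes "subring D" "overring D T" "F \<in> ffg D" shows "ext_ideal F T \<in> ffg T"
proof -
  obtain S where S: "finite S" "F = rspan D S" "F \<noteq> {0}" using assms(3) unfolding ffg_def by blast
  have "F \<subseteq> ext_ideal F T" using assms(2) by (simp add: overring_def ext_ideal_contains)
  then have "ext_ideal F T \<noteq> {0}" using S(2,3) submodule_zero[OF rspan_submodule[OF assms(1)]] by blast
  then show ?thesis unfolding ffg_def using S ext_ideal_rspan[OF assms(1,2)] by blast
qed

lemma nz_ideal_contraction:
  assumes "domain_with_qf D" "overring D T" "nz_ideal T J" shows "nz_ideal D (J \<inter> D)"
proof -
  have D: "subring D" and qf: "\<forall>x. \<exists>a\<in>D. \<exists>b\<in>D. b \<noteq> 0 \<and> x = a / b"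
    using assms(1) by (simp_all add: domain_with_qf_def)
  have DT: "D \<subseteq> T" using assms(2) by (simp add: overring_def)
  have J: "submodule T J" "J \<noteq> {0}" using assms(3) by (simp_all add: nz_ideal_def)
  have "submodule D (J \<inter> D)"
    using J(1) D DT by (auto simp: submodule_def subring_def)
  moreover have "J \<inter> D \<noteq> {0}"
  proof -
    obtain j where j: "j \<in> J" "j \<noteq> 0" using J submodule_zero by blast
    obtain a b where ab: "a \<in> D" "b \<in> D" "b \<noteq> 0" "j = a / b" using qf by blast
    have "b * j = a" "a \<noteq> 0" using ab j by auto
    moreover have "b * j \<in> J" using submodule_mult[OF J(1) _ j(1)] ab DT by blast
    ultimately show ?thesis using ab by blast
  qed
  ultimately show ?thesis unfolding nz_ideal_def by blast
qed

section \<open>Semistar operations of finite type\<close>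

lemma star_f_mono: "E \<subseteq> E' \<Longrightarrow> star_f R st E \<subseteq> star_f R st E'"
  unfolding star_f_def by blast

lemma star_subset_star_f: "F \<in> ffg R \<Longrightarrow> F \<subseteq> E \<Longrightarrow> st F \<subseteq> star_f R st E"
  unfolding star_f_def by blast

lemma star_fE:
  assumes "x \<in> star_f R st E"
  obtains F where "F \<in> ffg R" "F \<subseteq> E" "x \<in> st F"
  using assms unfolding star_f_def by blast

locale semistar_ring =
  fixes R :: "'K::field set" and st :: "'K set \<Rightarrow> 'K set"
  assumes subring: "subring R" and semistar: "semistar R st"
begin

lemma star_Fbar: "E \<in> Fbar R \<Longrightarrow> st E \<in> Fbar R"
  using semistar by (simp add: semistar_def)

lemma star_submodule: "E \<in> Fbar R \<Longrightarrow> submodule R (st E)"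
  using star_Fbar by (simp add: Fbar_def)

lemma star_extensive: "E \<in> Fbar R \<Longrightarrow> E \<subseteq> st E"
  using semistar by (simp add: semistar_def)

lemma star_idem: "E \<in> Fbar R \<Longrightarrow> st (st E) = st E"
  using semistar by (simp add: semistar_def)

lemma star_mono: "E \<in> Fbar R \<Longrightarrow> F \<in> Fbar R \<Longrightarrow> E \<subseteq> F \<Longrightarrow> st E \<subseteq> st F"
  using semistar by (simp add: semistar_def)

lemma star_scale: "x \<noteq> 0 \<Longrightarrow> E \<in> Fbar R \<Longrightarrow> st ((\<lambda>e. x * e) ` E) = (\<lambda>e. x * e) ` st E"
  using semistar by (simp add: semistar_def)

lemma star_ring_subset_if_one_mem:
  assumes "E \<in> Fbar R" "1 \<in> st E" shows "st R \<subseteq> st E"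
proof -
  have "R \<subseteq> st E" using submodule_mult[OF star_submodule[OF assms(1)] _ assms(2)] by (metis mult.right_neutral subsetI)
  then have "st R \<subseteq> st (st E)" using star_mono[OF subring_in_Fbar[OF subring] star_Fbar[OF assms(1)]] by blast
  then show ?thesis using star_idem[OF assms(1)] by simp
qed

lemma star_f_subset_star:
  assumes "E \<subseteq> E0" "E0 \<in> Fbar R" shows "star_f R st E \<subseteq> st E0"
proof
  fix x assume "x \<in> star_f R st E"
  then obtain F where "F \<in> ffg R" "F \<subseteq> E" "x \<in> st F" by (elim star_fE)
  then show "x \<in> st E0" using star_mono[OF ffg_Fbar[OF subring] assms(2)] assms(1) by blast
qed

lemma star_f_ffg: "F \<in> ffg R \<Longrightarrow> star_f R st F = st F"
  using star_f_subset_star[OF order_refl ffg_Fbar[OF subring]] star_subset_star_f[OF _ order_refl]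
  by (rule subset_antisym)

lemma star_f_extensive:
  assumes "E \<in> Fbar R" shows "E \<subseteq> star_f R st E"
proof
  fix x assume "x \<in> E"
  have E: "submodule R E" "E \<noteq> {0}" using assms by (simp_all add: Fbar_def)
  then obtain e where e: "e \<in> E" "e \<noteq> 0" using submodule_zero by blast
  let ?F = "rspan R {x, e}"
  have generators: "{x, e} \<subseteq> ?F" using rspan_generators[OF subring, of "{x, e}"] by simp
  then have "?F \<noteq> {0}" using e(2) by blast
  then have F: "?F \<in> ffg R" unfolding ffg_def by (intro CollectI exI[of _ "{x, e}"]) simp
  have "?F \<subseteq> E" using rspan_least[of "{x, e}" E R] \<open>x \<in> E\<close> e(1) E(1) by simp
  then have "st ?F \<subseteq> star_f R st E" by (rule star_subset_star_f[OF F])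
  moreover have "x \<in> st ?F" using generators star_extensive[OF ffg_Fbar[OF subring F]] by blast
  ultimately show "x \<in> star_f R st E" by blast
qed

lemma star_f_finite_subset:
  assumes "submodule R E" "finite S" "S \<noteq> {}" "S \<subseteq> star_f R st E"
  shows "\<exists>F\<in>ffg R. F \<subseteq> E \<and> S \<subseteq> st F"
  using assms(2-4)
proof (induction S rule: finite_ne_induct)
  case (singleton x)
  then have "x \<in> star_f R st E" by simp
  then obtain F where "F \<in> ffg R" "F \<subseteq> E" "x \<in> st F" by (elim star_fE)
  then show ?case by blast
next
  case (insert x S)
  then obtain F0 where F0: "F0 \<in> ffg R" "F0 \<subseteq> E" "S \<subseteq> st F0" by simp blast
  have "x \<in> star_f R st E" using insert.prems by simp
  then obtain F1 where F1: "F1 \<in> ffg R" "F1 \<subseteq> E" "x \<in> st F1" by (elim star_fE)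
  obtain F where F: "F \<in> ffg R" "F0 \<union> F1 \<subseteq> F" "F \<subseteq> E"
    using ffg_directed[OF subring F0(1) F1(1) F0(2) F1(2) assms(1)] .
  have "st F0 \<subseteq> st F" "st F1 \<subseteq> st F"
    using F(2) star_mono[OF ffg_Fbar[OF subring F0(1)] ffg_Fbar[OF subring F(1)]]
      star_mono[OF ffg_Fbar[OF subring F1(1)] ffg_Fbar[OF subring F(1)]] by simp_all
  then show ?case using F F0(3) F1(3) by blast
qed

lemma star_f_submodule:
  assumes "E \<in> Fbar R" shows "submodule R (star_f R st E)"
  unfolding submodule_def
proof (intro conjI ballI)
  have E: "submodule R E" using assms by (simp add: Fbar_def)
  show "0 \<in> star_f R st E" using star_f_extensive[OF assms] submodule_zero[OF E] by blast
  fix x y assume "x \<in> star_f R st E" "y \<in> star_f R st E"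
  then have "\<exists>F\<in>ffg R. F \<subseteq> E \<and> {x, y} \<subseteq> st F" using star_f_finite_subset[OF E, of "{x, y}"] by simp
  then obtain F where F: "F \<in> ffg R" "F \<subseteq> E" "{x, y} \<subseteq> st F" by blast
  then have "x + y \<in> st F" using submodule_add[OF star_submodule[OF ffg_Fbar[OF subring F(1)]]] by simp
  then show "x + y \<in> star_f R st E" using star_subset_star_f[OF F(1,2)] by blast
next
  fix r x assume "r \<in> R" "x \<in> star_f R st E"
  then obtain F where F: "F \<in> ffg R" "F \<subseteq> E" "x \<in> st F" by (elim star_fE)
  then have "r * x \<in> st F" using submodule_mult[OF star_submodule[OF ffg_Fbar[OF subring F(1)]] \<open>r \<in> R\<close>] by simp
  then show "r * x \<in> star_f R st E" using star_subset_star_f[OF F(1,2)] by blast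
qed

lemma star_f_idem:
  assumes "submodule R E" shows "star_f R st (star_f R st E) \<subseteq> star_f R st E"
proof
  fix x assume "x \<in> star_f R st (star_f R st E)"
  then obtain G where G: "G \<in> ffg R" "G \<subseteq> star_f R st E" "x \<in> st G" by (elim star_fE)
  obtain S where S: "finite S" "G = rspan R S" "G \<noteq> {0}" using G(1) unfolding ffg_def by blast
  have "S \<noteq> {}" using S(2,3) by (auto simp: rspan_def)
  moreover have "S \<subseteq> star_f R st E" using rspan_generators[OF subring S(1)] S(2) G(2) by blast
  ultimately obtain F where F: "F \<in> ffg R" "F \<subseteq> E" "S \<subseteq> st F"
    using star_f_finite_subset[OF assms S(1)] by blast
  have FF: "F \<in> Fbar R" using ffg_Fbar[OF subring F(1)] .
  have "G \<subseteq> st F" using rspan_least[OF S(1) F(3) star_submodule[OF FF]] S(2) by simp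
  then have "st G \<subseteq> st F"
    using star_mono[OF ffg_Fbar[OF subring G(1)] star_Fbar[OF FF]] star_idem[OF FF] by simp
  then show "x \<in> star_f R st E" using G(3) F star_subset_star_f by blast
qed

lemma star_f_Union_chain:
  assumes "C \<noteq> {}" "chain\<^sub>\<subseteq> C" "\<And>J. J \<in> C \<Longrightarrow> submodule R J" "x \<in> star_f R st (\<Union>C)"
  obtains J where "J \<in> C" "x \<in> star_f R st J"
proof -
  obtain G where G: "G \<in> ffg R" "G \<subseteq> \<Union>C" "x \<in> st G" using assms(4) by (elim star_fE)
  obtain S where S: "finite S" "G = rspan R S" using G(1) unfolding ffg_def by blast
  have "S \<subseteq> \<Union>C" using rspan_generators[OF subring S(1)] S(2) G(2) by blast
  then obtain J where J: "J \<in> C" "S \<subseteq> J"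
    using finite_subset_Union_chain[OF S(1) _ assms(1)] assms(2) by (metis chain_subset_alt_def)
  then have "G \<subseteq> J" using rspan_least[OF S(1)] assms(3) S(2) by blast
  then show thesis using that J(1) G star_subset_star_f by blast
qed

lemma star_f_eq_star_iff_one_mem:
  assumes "I \<subseteq> R" shows "star_f R st I = st R \<longleftrightarrow> 1 \<in> star_f R st I"
proof
  assume "star_f R st I = st R"
  then show "1 \<in> star_f R st I"
    using star_extensive[OF subring_in_Fbar[OF subring]] subring by (auto simp: subring_def)
next
  assume "1 \<in> star_f R st I"
  then obtain F where F: "F \<in> ffg R" "F \<subseteq> I" "1 \<in> st F" by (elim star_fE)
  have "st R \<subseteq> st F" using star_ring_subset_if_one_mem[OF ffg_Fbar[OF subring F(1)] F(3)] .
  also have "\<dots> \<subseteq> star_f R st I" using star_subset_star_f F by blast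
  finally show "star_f R st I = st R"
    using star_f_subset_star[OF assms subring_in_Fbar[OF subring]] by blast
qed

lemma one_notin_star_f_quasi_ideal:
  assumes "quasi_ideal R (star_f R st) J" "J \<noteq> R" shows "1 \<notin> star_f R st J"
proof
  assume "1 \<in> star_f R st J"
  then have "1 \<in> J" using assms(1) subring by (auto simp: quasi_ideal_def subring_def)
  then have "R \<subseteq> J" using submodule_mult[of R J _ 1] assms(1) by (fastforce simp: quasi_ideal_def nz_ideal_def)
  then show False using assms by (auto simp: quasi_ideal_def nz_ideal_def)
qed

end

section \<open>Quasi-maximal ideals\<close>

definition adjoin :: "'K::field set \<Rightarrow> 'K set \<Rightarrow> 'K \<Rightarrow> 'K set" where
  "adjoin R N x = {n + t * x | n t. n \<in> N \<and> t \<in> R}"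

lemma adjoinI: "n \<in> N \<Longrightarrow> t \<in> R \<Longrightarrow> n + t * x \<in> adjoin R N x"
  unfolding adjoin_def by blast

lemma adjoinE:
  assumes "a \<in> adjoin R N x"
  obtains n t where "a = n + t * x" "n \<in> N" "t \<in> R"
  using assms unfolding adjoin_def by blast

lemma adjoin_submodule:
  assumes "subring R" "submodule R N" shows "submodule R (adjoin R N x)"
  unfolding submodule_def
proof (intro conjI ballI)
  show "0 \<in> adjoin R N x"
    using adjoinI[OF submodule_zero[OF assms(2)], of 0] assms(1) by (simp add: subring_def)
next
  fix a b assume "a \<in> adjoin R N x" "b \<in> adjoin R N x"
  then obtain n1 t1 n2 t2 where ab: "a = n1 + t1 * x" "b = n2 + t2 * x"
    and coeffs: "n1 \<in> N" "t1 \<in> R" "n2 \<in> N" "t2 \<in> R"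
    by (elim adjoinE)
  have "a + b = (n1 + n2) + (t1 + t2) * x" using ab by (simp add: algebra_simps)
  moreover have "n1 + n2 \<in> N" "t1 + t2 \<in> R"
    using coeffs assms by (simp_all add: submodule_add subring_def)
  ultimately show "a + b \<in> adjoin R N x" by (metis adjoinI)
next
  fix r a assume "r \<in> R" "a \<in> adjoin R N x"
  then obtain n t where a: "a = n + t * x" and coeffs: "n \<in> N" "t \<in> R" by (elim adjoinE)
  have "r * a = r * n + (r * t) * x" using a by (simp add: algebra_simps)
  moreover have "r * n \<in> N" "r * t \<in> R"
    using coeffs assms \<open>r \<in> R\<close> by (simp_all add: submodule_mult subring_def)
  ultimately show "r * a \<in> adjoin R N x" by (metis adjoinI)
qed

lemma subset_adjoin: "subring R \<Longrightarrow> N \<subseteq> adjoin R N x"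
  using adjoinI[of _ N 0 R x] by (auto simp: subring_def)

lemma mem_adjoin: "subring R \<Longrightarrow> submodule R N \<Longrightarrow> x \<in> adjoin R N x"
  using adjoinI[of 0 N 1 R x] by (simp add: subring_def submodule_zero)

lemma adjoin_least:
  assumes "submodule R M" "N \<subseteq> M" "x \<in> M" shows "adjoin R N x \<subseteq> M"
  using assms by (auto elim!: adjoinE intro!: submodule_add[OF assms(1)] submodule_mult[OF assms(1)])

definition star_f_proper_ideals :: "'K::field set \<Rightarrow> ('K set \<Rightarrow> 'K set) \<Rightarrow> 'K set set" where
  "star_f_proper_ideals R st = {J. J \<subseteq> R \<and> submodule R J \<and> 1 \<notin> star_f R st J}"

context semistar_ring
begin

lemma maximal_star_f_proper_ideal_exists:
  assumes "A \<in> star_f_proper_ideals R st"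
  obtains N where "N \<in> star_f_proper_ideals R st" "A \<subseteq> N"
    "\<And>J. J \<in> star_f_proper_ideals R st \<Longrightarrow> N \<subseteq> J \<Longrightarrow> J = N"
proof -
  let ?P = "{J \<in> star_f_proper_ideals R st. A \<subseteq> J}"
  have "\<exists>N\<in>?P. \<forall>J\<in>?P. N \<subseteq> J \<longrightarrow> J = N"
  proof (rule subset_Zorn_nonempty)
    show "?P \<noteq> {}" using assms by blast
  next
    fix C assume C: "C \<noteq> {}" "subset.chain ?P C"
    then have chain: "chain\<^sub>\<subseteq> C" and members: "\<And>J. J \<in> C \<Longrightarrow> J \<in> ?P"
      by (auto simp: subset_chain_def chain_subset_def)
    then have submodules: "\<And>J. J \<in> C \<Longrightarrow> submodule R J" by (simp add: star_f_proper_ideals_def)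
    have "\<Union>C \<subseteq> R" using members by (auto simp: star_f_proper_ideals_def)
    moreover have "A \<subseteq> \<Union>C" using members C(1) by blast
    moreover have "submodule R (\<Union>C)" using submodule_Union_chain[OF C(1) chain submodules] .
    moreover have "1 \<notin> star_f R st (\<Union>C)"
    proof
      assume "1 \<in> star_f R st (\<Union>C)"
      then obtain J where "J \<in> C" "1 \<in> star_f R st J"
        using star_f_Union_chain[OF C(1) chain submodules] by blast
      then show False using members by (simp add: star_f_proper_ideals_def)
    qed
    ultimately show "\<Union>C \<in> ?P" by (simp add: star_f_proper_ideals_def)
  qed
  then obtain N where N: "N \<in> ?P" "\<forall>J\<in>?P. N \<subseteq> J \<longrightarrow> J = N" by blast
  show thesis
  proof (rule that)
    show "N \<in> star_f_proper_ideals R st" "A \<subseteq> N" using N(1) by simp_all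
    fix J assume "J \<in> star_f_proper_ideals R st" "N \<subseteq> J"
    then show "J = N" using N by blast
  qed
qed

context
  fixes N
  assumes N_subset: "N \<subseteq> R" and N_submodule: "submodule R N"
    and N_proper: "1 \<notin> star_f R st N" and N_nonzero: "N \<noteq> {0}"
    and N_maximal: "\<And>J. J \<in> star_f_proper_ideals R st \<Longrightarrow> N \<subseteq> J \<Longrightarrow> J = N"
begin

lemma maximal_proper_Fbar: "N \<in> Fbar R"
  using N_submodule N_nonzero by (simp add: Fbar_def)

lemma maximal_proper_one_mem_star_f_adjoin:
  assumes "x \<in> R" "x \<notin> N" shows "1 \<in> star_f R st (adjoin R N x)"
proof (rule ccontr)
  assume "1 \<notin> star_f R st (adjoin R N x)"
  moreover have "adjoin R N x \<subseteq> R"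
    using adjoin_least[OF subring_submodule[OF subring] N_subset assms(1)] .
  ultimately have "adjoin R N x \<in> star_f_proper_ideals R st"
    using adjoin_submodule[OF subring N_submodule] by (simp add: star_f_proper_ideals_def)
  then have "adjoin R N x = N" using N_maximal subset_adjoin[OF subring] by blast
  then show False using mem_adjoin[OF subring N_submodule] assms(2) by blast
qed

lemma maximal_proper_quasi_ideal: "quasi_ideal R (star_f R st) N"
proof -
  have "star_f R st N \<inter> R \<subseteq> N"
  proof
    fix x assume x: "x \<in> star_f R st N \<inter> R"
    show "x \<in> N"
    proof (rule ccontr)
      assume "x \<notin> N"
      have "adjoin R N x \<subseteq> star_f R st N"
        using adjoin_least[OF star_f_submodule star_f_extensive] maximal_proper_Fbar x by blast
      then have "star_f R st (adjoin R N x) \<subseteq> star_f R st N"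
        using star_f_mono star_f_idem[OF N_submodule] by blast
      then show False
        using maximal_proper_one_mem_star_f_adjoin \<open>x \<notin> N\<close> x N_proper by blast
    qed
  qed
  then show ?thesis
    using star_f_extensive[OF maximal_proper_Fbar] N_subset N_submodule N_nonzero
    unfolding quasi_ideal_def nz_ideal_def by blast
qed

lemma maximal_proper_ne_ring: "N \<noteq> R"
  using star_f_extensive[OF maximal_proper_Fbar] N_proper subring
  by (auto simp: subring_def)

lemma maximal_proper_prime: "prime_ideal R N"
  unfolding prime_ideal_def
proof (intro conjI ballI impI N_subset N_submodule maximal_proper_ne_ring)
  fix x y assume x: "x \<in> R" and y: "y \<in> R" and xy: "x * y \<in> N"
  show "x \<in> N \<or> y \<in> N"
  proof (rule ccontr)
    assume "\<not> (x \<in> N \<or> y \<in> N)"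
    then have "x \<notin> N" "y \<notin> N" by simp_all
    obtain G where G: "G \<in> ffg R" "G \<subseteq> adjoin R N x" "1 \<in> st G"
      using maximal_proper_one_mem_star_f_adjoin[OF x \<open>x \<notin> N\<close>] by (elim star_fE)
    have "y \<noteq> 0" using \<open>y \<notin> N\<close> submodule_zero[OF N_submodule] by auto
    have "(\<lambda>e. y * e) ` G \<subseteq> N"
    proof
      fix z assume "z \<in> (\<lambda>e. y * e) ` G"
      then obtain e where e: "e \<in> adjoin R N x" "z = y * e" using G(2) by blast
      from e(1) obtain n t where "e = n + t * x" "n \<in> N" "t \<in> R" by (rule adjoinE)
      with e(2) have z: "z = y * (n + t * x)" "n \<in> N" "t \<in> R" by simp_all
      have "y * n \<in> N" "t * (x * y) \<in> N"
        using submodule_mult[OF N_submodule] y z xy by simp_all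
      moreover have "z = y * n + t * (x * y)" using z(1) by (simp add: algebra_simps)
      ultimately show "z \<in> N" using submodule_add[OF N_submodule] by simp
    qed
    moreover have "y \<in> st ((\<lambda>e. y * e) ` G)"
      using star_scale[OF \<open>y \<noteq> 0\<close> ffg_Fbar[OF subring G(1)]] G(3) by force
    ultimately have "y \<in> star_f R st N \<inter> R"
      using star_subset_star_f[OF ffg_scale[OF subring \<open>y \<noteq> 0\<close> G(1)]] y by blast
    then show False
      using maximal_proper_quasi_ideal \<open>y \<notin> N\<close> unfolding quasi_ideal_def by blast
  qed
qed

lemma maximal_proper_quasi_maximal: "quasi_maximal R (star_f R st) N"
  unfolding quasi_maximal_def
proof (intro conjI allI impI maximal_proper_quasi_ideal maximal_proper_ne_ring)
  fix J assume J: "quasi_ideal R (star_f R st) J \<and> J \<noteq> R \<and> N \<subseteq> J"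
  then have "J \<in> star_f_proper_ideals R st"
    using one_notin_star_f_quasi_ideal
    by (simp add: star_f_proper_ideals_def quasi_ideal_def nz_ideal_def)
  then show "J = N" using N_maximal J by blast
qed

end

lemma quasi_maximal_prime_above:
  assumes "A \<subseteq> R" "submodule R A" "A \<noteq> {0}" "1 \<notin> star_f R st A"
  obtains N where "A \<subseteq> N" "quasi_prime R (star_f R st) N" "quasi_maximal R (star_f R st) N"
proof -
  obtain N where N: "N \<in> star_f_proper_ideals R st" "A \<subseteq> N"
    and N_maximal: "\<And>J. J \<in> star_f_proper_ideals R st \<Longrightarrow> N \<subseteq> J \<Longrightarrow> J = N"
    using maximal_star_f_proper_ideal_exists assms by (auto simp: star_f_proper_ideals_def)
  have N_ideal: "N \<subseteq> R" "submodule R N" "1 \<notin> star_f R st N"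
    using N(1) by (simp_all add: star_f_proper_ideals_def)
  have N_nonzero: "N \<noteq> {0}" using N(2) assms(3) submodule_zero[OF assms(2)] by blast
  note maximal = N_ideal N_nonzero N_maximal
  show thesis
  proof (rule that)
    show "A \<subseteq> N" by (rule N(2))
    show "quasi_prime R (star_f R st) N"
      using maximal_proper_prime[OF maximal] maximal_proper_quasi_ideal[OF maximal]
      by (simp add: quasi_prime_def)
    show "quasi_maximal R (star_f R st) N" by (rule maximal_proper_quasi_maximal[OF maximal])
  qed
qed

end

section \<open>Linkedness\<close>

definition star_f_linked :: "'K::field set \<Rightarrow> ('K set \<Rightarrow> 'K set) \<Rightarrow> 'K set \<Rightarrow> ('K set \<Rightarrow> 'K set) \<Rightarrow> bool" where
  "star_f_linked D st T st' \<longleftrightarrow>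
     (\<forall>I. nz_ideal D I \<and> star_f D st I = st D \<longrightarrow> star_f T st' (ext_ideal I T) = st' T)"

lemma linked_iff_star_f_linked:
  assumes "subring D" "overring D T" "semistar D st" "semistar T st'"
  shows "linked D st T st' \<longleftrightarrow> star_f_linked D st T st'"
proof -
  interpret D: semistar_ring D st using assms(1,3) by unfold_locales
  have T: "subring T" using assms(2) by (simp add: overring_def)
  interpret T: semistar_ring T st' using T assms(4) by unfold_locales
  show ?thesis unfolding linked_def star_f_linked_def
  proof (intro iffI allI impI)
    fix I assume linked: "\<forall>F. nz_ideal D F \<and> F \<in> ffg D \<and> st F = st D \<longrightarrow> st' (ext_ideal F T) = st' T"
      and I: "nz_ideal D I \<and> star_f D st I = st D"
    then have ID: "I \<subseteq> D" by (simp add: nz_ideal_def)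
    then have "1 \<in> star_f D st I" using I D.star_f_eq_star_iff_one_mem by blast
    then obtain F where F: "F \<in> ffg D" "F \<subseteq> I" "1 \<in> st F" by (elim star_fE)
    have "star_f D st F = st D"
      using D.star_f_eq_star_iff_one_mem[of F] D.star_f_ffg[OF F(1)] F ID by simp
    moreover have "nz_ideal D F"
      using ffg_Fbar[OF assms(1) F(1)] F(2) ID by (simp add: nz_ideal_def Fbar_def)
    ultimately have "st' (ext_ideal F T) = st' T" using linked F(1) D.star_f_ffg[OF F(1)] by simp
    then have "1 \<in> st' (ext_ideal F T)"
      using T.star_extensive[OF subring_in_Fbar[OF T]] T by (auto simp: subring_def)
    moreover have "ext_ideal F T \<subseteq> ext_ideal I T" using ext_ideal_mono[OF T F(2)] .
    ultimately have "1 \<in> star_f T st' (ext_ideal I T)"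
      using star_subset_star_f[OF ext_ideal_ffg[OF assms(1,2) F(1)]] by blast
    moreover have "ext_ideal I T \<subseteq> T"
      using ext_ideal_subset[OF T] ID assms(2) by (auto simp: overring_def)
    ultimately show "star_f T st' (ext_ideal I T) = st' T"
      using T.star_f_eq_star_iff_one_mem by blast
  next
    fix F assume "\<forall>I. nz_ideal D I \<and> star_f D st I = st D \<longrightarrow> star_f T st' (ext_ideal I T) = st' T"
      and F: "nz_ideal D F \<and> F \<in> ffg D \<and> st F = st D"
    then have "star_f T st' (ext_ideal F T) = st' T" using D.star_f_ffg by simp
    then show "st' (ext_ideal F T) = st' T"
      using T.star_f_ffg ext_ideal_ffg[OF assms(1,2)] F by simp
  qed
qed

lemma star_f_contraction_ne_star:
  assumes "domain_with_qf D" "overring D T" "semistar T st'" "star_f_linked D st T st'"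
    and J: "quasi_ideal T (star_f T st') J" "J \<noteq> T"
  shows "star_f D st (J \<inter> D) \<noteq> st D"
proof
  have T: "subring T" using assms(2) by (simp add: overring_def)
  interpret T: semistar_ring T st' using T assms(3) by unfold_locales
  assume "star_f D st (J \<inter> D) = st D"
  moreover have "nz_ideal D (J \<inter> D)"
    using nz_ideal_contraction[OF assms(1,2)] J(1) by (simp add: quasi_ideal_def)
  ultimately have "star_f T st' (ext_ideal (J \<inter> D) T) = st' T"
    using assms(4) by (simp add: star_f_linked_def)
  moreover have "ext_ideal (J \<inter> D) T \<subseteq> J"
    using J(1) by (intro ext_ideal_least) (auto simp: quasi_ideal_def nz_ideal_def)
  moreover have "J \<subseteq> T" using J(1) by (simp add: quasi_ideal_def nz_ideal_def)
  ultimately have "1 \<in> star_f T st' (ext_ideal (J \<inter> D) T)"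
    using T.star_f_eq_star_iff_one_mem by blast
  then have "1 \<in> star_f T st' J" using star_f_mono \<open>ext_ideal (J \<inter> D) T \<subseteq> J\<close> by blast
  then show False using T.one_notin_star_f_quasi_ideal J by blast
qed

lemma quasi_maximal_contraction_star_f_eq_star:
  assumes "subring D" "overring D T" "semistar D st" "semistar T st'" "\<not> star_f_linked D st T st'"
  obtains N where "quasi_prime T (star_f T st') N" "quasi_maximal T (star_f T st') N"
    "star_f D st (N \<inter> D) = st D"
proof -
  interpret D: semistar_ring D st using assms(1,3) by unfold_locales
  have T: "subring T" "D \<subseteq> T" using assms(2) by (simp_all add: overring_def)
  interpret T: semistar_ring T st' using T assms(4) by unfold_locales
  obtain I where I: "nz_ideal D I" "star_f D st I = st D" "star_f T st' (ext_ideal I T) \<noteq> st' T"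
    using assms(5) by (auto simp: star_f_linked_def)
  have ID: "I \<subseteq> D" using I(1) by (simp add: nz_ideal_def)
  have IT: "ext_ideal I T \<subseteq> T" using ext_ideal_subset[OF T(1)] ID T(2) by blast
  have "ext_ideal I T \<in> Fbar T" using ext_ideal_Fbar[OF T(1) I(1)] .
  moreover have "1 \<notin> star_f T st' (ext_ideal I T)" using T.star_f_eq_star_iff_one_mem[OF IT] I(3) by simp
  ultimately obtain N where N: "ext_ideal I T \<subseteq> N" "quasi_prime T (star_f T st') N"
    "quasi_maximal T (star_f T st') N"
    using T.quasi_maximal_prime_above[OF IT] by (auto simp: Fbar_def)
  have "I \<subseteq> N \<inter> D" using ext_ideal_contains[OF T(1)] N(1) ID by blast
  then have "1 \<in> star_f D st (N \<inter> D)"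
    using star_f_mono D.star_f_eq_star_iff_one_mem[OF ID] I(2) by blast
  then have "star_f D st (N \<inter> D) = st D" using D.star_f_eq_star_iff_one_mem by simp
  then show thesis using that N(2,3) by blast
qed

theorem proposition3p2:
  fixes D T :: "'K::field set" and st st' :: "'K set \<Rightarrow> 'K set"
  assumes "domain_with_qf D" and "overring D T"
    and "semistar D st" and "semistar T st'"
  shows "(linked D st T st' \<longleftrightarrow>
           (\<forall>I. nz_ideal D I \<and> star_f D st I = st D \<longrightarrow> star_f T st' (ext_ideal I T) = st' T))
       \<and> (linked D st T st' \<longleftrightarrow>
           (\<forall>J. quasi_ideal T (star_f T st') J \<and> J \<noteq> T \<longrightarrow> star_f D st (J \<inter> D) \<noteq> st D))
       \<and> (linked D st T st' \<longleftrightarrow>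
           (\<forall>Q. quasi_prime T (star_f T st') Q \<longrightarrow> star_f D st (Q \<inter> D) \<noteq> st D))
       \<and> (linked D st T st' \<longleftrightarrow>
           (\<forall>N. quasi_maximal T (star_f T st') N \<longrightarrow> star_f D st (N \<inter> D) \<noteq> st D))"
proof -
  have D: "subring D" using assms(1) by (simp add: domain_with_qf_def)
  have linked: "linked D st T st' \<longleftrightarrow> star_f_linked D st T st'"
    using linked_iff_star_f_linked[OF D assms(2-4)] .
  have contraction_ne: "star_f D st (J \<inter> D) \<noteq> st D"
    if "star_f_linked D st T st'" "quasi_ideal T (star_f T st') J" "J \<noteq> T" for J
    using star_f_contraction_ne_star[OF assms(1,2,4) that] .
  have quasi_maximal_witness: "\<exists>N. quasi_prime T (star_f T st') N \<and> quasi_maximal T (star_f T st') N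
      \<and> star_f D st (N \<inter> D) = st D" if "\<not> star_f_linked D st T st'"
    using quasi_maximal_contraction_star_f_eq_star[OF D assms(2-4) that] by blast
  have proper: "Q \<noteq> T" if "quasi_prime T (star_f T st') Q \<or> quasi_maximal T (star_f T st') Q" for Q
    using that by (auto simp: quasi_prime_def prime_ideal_def quasi_maximal_def)
  have quasi: "quasi_ideal T (star_f T st') Q"
    if "quasi_prime T (star_f T st') Q \<or> quasi_maximal T (star_f T st') Q" for Q
    using that by (auto simp: quasi_prime_def quasi_maximal_def)
  show ?thesis
    unfolding linked star_f_linked_def[symmetric]
    using contraction_ne quasi_maximal_witness proper quasi by metis
qed

end
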